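(* Consider ${\sf BubbleRank}$ (defined below) run with parameter $\delta\in(0,1)$ in a stochastic click bandit satisfying A1–A5 with $\alpha(1)>\dots>\alpha(K)>0$, and let $$\mathbf{P}_t=\{(i,j)\in[K]^2: i<j,\ |\bar{\mathbf{R}}_t^{-1}(i)-\bar{\mathbf{R}}_t^{-1}(j)|=1,\ \mathbf{s}_{t-1}(i,j)\le2\sqrt{\mathbf{n}_{t-1}(i,j)\log(1/\delta)}\}.$$ Then on the event $\mathcal{E}$ defined below, for every $t\in[n]$, $$\sum_{k=1}^K\big(\chi(\mathcal{R}^*,k)\alpha(k)-\chi(\mathbf{R}_t,k)\alpha(\mathbf{R}_t(k))\big)\le3K\chi_{\max}\sum_{i=1}^K\sum_{j=i+1}^K\mathbb{1}\{(i,j)\in\mathbf{P}_t\}(\alpha(i)-\alpha(j)).$$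
   Context: Model. Items $[K]$; a list $\mathcal{R}$ orders all $K$ items, $\mathcal{R}(k)$ is the item at position $k$, $\mathcal{R}^{-1}(i)$ the position of $i$; $\Pi_K$ the set of lists. At time $t$, $(\mathbf{A}_t,\mathbf{X}_t)\in\{0,1\}^K\times\{0,1\}^{\Pi_K\times[K]}$ is drawn i.i.d. from a product distribution; the learner displays $\mathbf{R}_t$ and observes $\mathbf{c}_t(k)=\mathbf{X}_t(\mathbf{R}_t,k)\mathbf{A}_t(\mathbf{R}_t(k))$. $\alpha=\mathbb{E}[\mathbf{A}_t]$, $\chi=\mathbb{E}[\mathbf{X}_t]$, $r(\mathcal{R},\alpha,\chi)=\sum_k\chi(\mathcal{R},k)\alpha(\mathcal{R}(k))$, $\mathcal{R}^*=(1,\dots,K)$, $\chi_{\max}=\chi(\mathcal{R}^*,1)$. Assumptions for all lists $\mathcal{R},\mathcal{R}'$ and positions $k<\ell$: (A1) $r(\mathcal{R},\alpha,\chi)\le r(\mathcal{R}^*,\alpha,\chi)$; (A2) $\{\mathcal{R}(1..k-1)\}=\{\mathcal{R}'(1..k-1)\}\Rightarrow\chi(\mathcal{R},k)=\chi(\mathcal{R}',k)$; (A3) $\chi(\mathcal{R},k)\ge\chi(\mathcal{R},\ell)$; (A4) if $\mathcal{R},\mathcal{R}'$ differ only by exchanging items at positions $k,\ell$, then $\alpha(\mathcal{R}(k))\le\alpha(\mathcal{R}(\ell))\iff\chi(\mathcal{R},\ell)\ge\chi(\mathcal{R}',\ell)$; (A5) $\chi(\mathcal{R},k)\ge\chi(\mathcal{R}^*,k)$.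 Algorithm ${\sf BubbleRank}$ (initial list $\mathcal{R}_0$, horizon $n$): $\mathbf{s}_0\equiv\mathbf{n}_0\equiv0$, $\bar{\mathbf{R}}_1=\mathcal{R}_0$. For $t=1,\dots,n$: $h=t\bmod2$, $\mathbf{R}_t\leftarrow\bar{\mathbf{R}}_t$; for $k=1,\dots,\lfloor(K-h)/2\rfloor$ with $i=\mathbf{R}_t(2k-1+h)$, $j=\mathbf{R}_t(2k+h)$: if $\mathbf{s}_{t-1}(i,j)\le2\sqrt{\mathbf{n}_{t-1}(i,j)\log(1/\delta)}$ exchange these two positions with probability $1/2$. Display $\mathbf{R}_t$, observe $\mathbf{c}_t$. $\mathbf{s}_t=\mathbf{s}_{t-1}$, $\mathbf{n}_t=\mathbf{n}_{t-1}$; for each such $k$ with $i=\mathbf{R}_t(2k-1+h)$, $j=\mathbf{R}_t(2k+h)$: if $|\mathbf{c}_t(2k-1+h)-\mathbf{c}_t(2k+h)|=1$, add $\mathbf{c}_t(2k-1+h)-\mathbf{c}_t(2k+h)$ to $\mathbf{s}_t(i,j)$, its negative to $\mathbf{s}_t(j,i)$, and $1$ to $\mathbf{n}_t(i,j),\mathbf{n}_t(j,i)$. Then $\bar{\mathbf{R}}_{t+1}=\bar{\mathbf{R}}_t$; for $k=1,\dots,K-1$ in order with $i=\bar{\mathbf{R}}_{t+1}(k)$, $j=\bar{\mathbf{R}}_{t+1}(k+1)$: if $\mathbf{s}_t(j,i)>2\sqrt{\mathbf{n}_t(j,i)\log(1/\delta)}$ exchange positions $k,k+1$ of $\bar{\mathbf{R}}_{t+1}$.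 Event $\mathcal{E}=\bigcap_{t\in[n]}(\mathcal{E}_{t,1}\cap\mathcal{E}_{t,2})$, where $\mathcal{E}_{t,1}$: for all $i<j$, $\frac{\alpha(i)-\alpha(j)}{\alpha(i)+\alpha(j)}\mathbf{n}_t(i,j)-2\sqrt{\mathbf{n}_t(i,j)\log(1/\delta)}\le\mathbf{s}_t(i,j)$; and $\mathcal{E}_{t,2}$: for all $i>j$, $\mathbf{s}_t(i,j)\le2\sqrt{\mathbf{n}_t(i,j)\log(1/\delta)}$. *)

theory Defs
  imports Complex_Main
begin

(* Conventions: items and positions are 0-indexed: items {0..<K}, positions {0..<K}.
   A list (ranking) is a nat list that is a permutation of [0..<K];
   R ! k is the item at position k, index R i is the position of item i. *)

definition lists_K :: "nat \<Rightarrow> nat list set" where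
  "lists_K K = {R. distinct R \<and> set R = {0..<K}}"

definition opt_list :: "nat \<Rightarrow> nat list" where
  "opt_list K = [0..<K]"

definition reward :: "nat \<Rightarrow> nat list \<Rightarrow> (nat \<Rightarrow> real) \<Rightarrow> (nat list \<Rightarrow> nat \<Rightarrow> real) \<Rightarrow> real" where
  "reward K R \<alpha> \<chi> = (\<Sum>k<K. \<chi> R k * \<alpha> (R ! k))"

definition swap_list :: "nat list \<Rightarrow> nat \<Rightarrow> nat \<Rightarrow> nat list" where
  "swap_list R k l = R[k := R ! l, l := R ! k]"

definition conf :: "real \<Rightarrow> nat \<Rightarrow> real" where
  "conf \<delta> m = 2 * sqrt (real m * ln (1 / \<delta>))"

(* 0-indexed first positions of the compared pairs at parity h:
   paper positions 2k-1+h, 2k+h for k = 1..floor((K-h)/2) *)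
definition pair_positions :: "nat \<Rightarrow> nat \<Rightarrow> nat list" where
  "pair_positions K h = map (\<lambda>q. 2 * q + h) [0..<(K - h) div 2]"

(* Construction of the displayed list R_t from barR_t; coin p = outcome of the fair coin
   (swap with probability 1/2) for the pair starting at position p. *)
definition display_list ::
  "real \<Rightarrow> nat \<Rightarrow> nat \<Rightarrow> (nat \<Rightarrow> nat \<Rightarrow> int) \<Rightarrow> (nat \<Rightarrow> nat \<Rightarrow> nat) \<Rightarrow> (nat \<Rightarrow> bool)
    \<Rightarrow> nat list \<Rightarrow> nat list" where
  "display_list \<delta> K h s n coin barR =
     foldl (\<lambda>R p. if real_of_int (s (R ! p) (R ! (p + 1))) \<le> conf \<delta> (n (R ! p) (R ! (p + 1))) \<and> coin p
                  then swap_list R p (p + 1) else R) barR (pair_positions K h)"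

definition update_stats ::
  "nat \<Rightarrow> nat \<Rightarrow> nat list \<Rightarrow> (nat \<Rightarrow> int) \<Rightarrow> (nat \<Rightarrow> nat \<Rightarrow> int) \<times> (nat \<Rightarrow> nat \<Rightarrow> nat)
    \<Rightarrow> (nat \<Rightarrow> nat \<Rightarrow> int) \<times> (nat \<Rightarrow> nat \<Rightarrow> nat)" where
  "update_stats K h R c sn0 =
     foldl (\<lambda>(s, n) p.
        let i = R ! p; j = R ! (p + 1); d = c p - c (p + 1) in
        if \<bar>d\<bar> = 1 then
          ((\<lambda>a b. if a = i \<and> b = j then s a b + d else if a = j \<and> b = i then s a b - d else s a b),
           (\<lambda>a b. if (a = i \<and> b = j) \<or> (a = j \<and> b = i) then n a b + 1 else n a b))
        else (s, n)) sn0 (pair_positions K h)"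

definition update_list ::
  "real \<Rightarrow> nat \<Rightarrow> (nat \<Rightarrow> nat \<Rightarrow> int) \<Rightarrow> (nat \<Rightarrow> nat \<Rightarrow> nat) \<Rightarrow> nat list \<Rightarrow> nat list" where
  "update_list \<delta> K s n barR =
     foldl (\<lambda>R p. if real_of_int (s (R ! (p + 1)) (R ! p)) > conf \<delta> (n (R ! (p + 1)) (R ! p))
                  then swap_list R p (p + 1) else R) barR [0..<K - 1]"

(* bubble_state ... t = (s_t, n_t, barR_{t+1}).
   A t i : realization of A_t(i); X t R k : realization of X_t(R,k); coin t p : fair coins at time t. *)
primrec bubble_state ::
  "real \<Rightarrow> nat \<Rightarrow> nat list \<Rightarrow> (nat \<Rightarrow> nat \<Rightarrow> int) \<Rightarrow> (nat \<Rightarrow> nat list \<Rightarrow> nat \<Rightarrow> int)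
    \<Rightarrow> (nat \<Rightarrow> nat \<Rightarrow> bool) \<Rightarrow> nat
    \<Rightarrow> (nat \<Rightarrow> nat \<Rightarrow> int) \<times> (nat \<Rightarrow> nat \<Rightarrow> nat) \<times> nat list" where
  "bubble_state \<delta> K R0 A X coin 0 = ((\<lambda>_ _. 0), (\<lambda>_ _. 0), R0)"
| "bubble_state \<delta> K R0 A X coin (Suc t) =
     (case bubble_state \<delta> K R0 A X coin t of (s, n, barR) \<Rightarrow>
       let h = Suc t mod 2;
           Rt = display_list \<delta> K h s n (coin (Suc t)) barR;
           c = (\<lambda>k. X (Suc t) Rt k * A (Suc t) (Rt ! k));
           (s', n') = update_stats K h Rt c (s, n)
       in (s', n', update_list \<delta> K s' n' barR))"

definition stat_s where "stat_s \<delta> K R0 A X coin t = fst (bubble_state \<delta> K R0 A X coin t)"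
definition stat_n where "stat_n \<delta> K R0 A X coin t = fst (snd (bubble_state \<delta> K R0 A X coin t))"

(* barR_t for t \<ge> 1 *)
definition bar_list where "bar_list \<delta> K R0 A X coin t = snd (snd (bubble_state \<delta> K R0 A X coin (t - 1)))"

(* displayed list R_t for t \<ge> 1 *)
definition shown_list where
  "shown_list \<delta> K R0 A X coin t =
     display_list \<delta> K (t mod 2) (stat_s \<delta> K R0 A X coin (t - 1)) (stat_n \<delta> K R0 A X coin (t - 1))
       (coin t) (bar_list \<delta> K R0 A X coin t)"

definition good_event where
  "good_event \<delta> K R0 A X coin \<alpha> hor \<longleftrightarrow>
     (\<forall>t\<in>{1..hor}.
        (\<forall>i j. i < j \<and> j < K \<longrightarrow>
           (\<alpha> i - \<alpha> j) / (\<alpha> i + \<alpha> j) * real (stat_n \<delta> K R0 A X coin t i j)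
             - conf \<delta> (stat_n \<delta> K R0 A X coin t i j)
           \<le> real_of_int (stat_s \<delta> K R0 A X coin t i j)) \<and>
        (\<forall>i j. j < i \<and> i < K \<longrightarrow>
           real_of_int (stat_s \<delta> K R0 A X coin t i j) \<le> conf \<delta> (stat_n \<delta> K R0 A X coin t i j)))"

definition pos_of :: "nat list \<Rightarrow> nat \<Rightarrow> nat" where
  "pos_of R i = (THE k. k < length R \<and> R ! k = i)"

definition P_set where
  "P_set \<delta> K R0 A X coin t =
     {(i, j). i < j \<and> j < K \<and>
        (let bR = bar_list \<delta> K R0 A X coin t in
          \<bar>int (pos_of bR i) - int (pos_of bR j)\<bar> = 1) \<and>
        real_of_int (stat_s \<delta> K R0 A X coin (t - 1) i j) \<le> conf \<delta> (stat_n \<delta> K R0 A X coin (t - 1) i j)}"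

end

theory Submission
  imports Defs
begin

(* Call an inversion (x, y) of the list barR_t confident if the statistics already certify
   that y beats x.  On E no inversion of barR_t is confident with respect to s_(t-1), n_(t-1):
   a new certificate can only arise for a pair compared at time t, i.e. for one of the disjoint
   adjacent pairs of barR_t, and the sequential pass of the update swaps exactly those pairs,
   while E forbids certifying a worse item over a better one.  Hence every adjacent inversion
   of barR_t lies in P_t, and the displacement alpha(k) - alpha(barR_t(k)) at each position,
   a telescoping sum over adjacent inversions, is at most G = sum over P_t of alpha(i) - alpha(j).
   The random exchanges of the displayed list cost at most another G per position, and by A3
   and A5 each position contributes at most chi_max * 2G to the regret.  A1, A2, A4, the range
   of delta and the 0/1 values of A and X are not needed, and the factor 3 could be 2. *)

lemma lists_KD:
  assumes "R \<in> lists_K K"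
  shows "distinct R" "set R = {0..<K}" "length R = K"
  using assms distinct_card[of R] by (auto simp: lists_K_def)

lemma nth_lists_K_less: "R \<in> lists_K K \<Longrightarrow> q < K \<Longrightarrow> R ! q < K"
  using lists_KD[of R K] by (metis atLeastLessThan_iff nth_mem)

lemma length_swap_list [simp]: "length (swap_list R k l) = length R"
  by (simp add: swap_list_def)

lemma set_swap_list: "k < length R \<Longrightarrow> l < length R \<Longrightarrow> set (swap_list R k l) = set R"
  by (simp add: swap_list_def set_swap)

lemma distinct_swap_list: "k < length R \<Longrightarrow> l < length R \<Longrightarrow> distinct (swap_list R k l) = distinct R"
  by (simp add: swap_list_def distinct_swap)

lemma nth_swap_list_adjacent:
  "p + 1 < length R \<Longrightarrow> q < length R \<Longrightarrow>
   swap_list R p (p + 1) ! q = (if q = p then R ! (p + 1) else if q = p + 1 then R ! p else R ! q)"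
  by (simp add: swap_list_def nth_list_update)

(* Items with smaller index are better, so an inversion is a pair (x, y), y < x, with x
   shown above y. *)
definition inversions :: "nat list \<Rightarrow> (nat \<times> nat) set" where
  "inversions R = {(x, y). \<exists>p q. p < q \<and> q < length R \<and> R ! p = x \<and> R ! q = y \<and> y < x}"

lemma inversions_swap_list_adjacent:
  assumes R: "distinct R" "p + 1 < length R" and inv: "R ! (p + 1) < R ! p"
  shows "inversions (swap_list R p (p + 1)) \<subseteq> inversions R - {(R ! p, R ! (p + 1))}"
proof
  fix z assume "z \<in> inversions (swap_list R p (p + 1))"
  then obtain q r where qr: "q < r" "r < length R" "z = (swap_list R p (p + 1) ! q, swap_list R p (p + 1) ! r)"
    "swap_list R p (p + 1) ! r < swap_list R p (p + 1) ! q"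
    by (auto simp: inversions_def)
  define \<sigma> where "\<sigma> i = (if i = p then p + 1 else if i = p + 1 then p else i)" for i
  have \<sigma>: "swap_list R p (p + 1) ! i = R ! \<sigma> i" if "i < length R" for i
    using nth_swap_list_adjacent[OF R(2) that] by (simp add: \<sigma>_def)
  have "\<not> (q = p \<and> r = p + 1)"
    using qr \<sigma> inv by (auto simp: \<sigma>_def)
  then have "\<sigma> q < \<sigma> r" "\<sigma> r < length R"
    using qr R(2) by (auto simp: \<sigma>_def)
  then have "z \<in> inversions R"
    using qr \<sigma> by (auto simp: inversions_def)
  moreover have "z \<noteq> (R ! p, R ! (p + 1))"
    using qr \<sigma> R by (auto simp: \<sigma>_def nth_eq_iff_index_eq)
  ultimately show "z \<in> inversions R - {(R ! p, R ! (p + 1))}" by simp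
qed

definition swap_pass :: "(nat \<Rightarrow> nat \<Rightarrow> nat \<Rightarrow> bool) \<Rightarrow> nat list \<Rightarrow> nat list \<Rightarrow> nat list" where
  "swap_pass C ps R = foldl (\<lambda>R p. if C p (R ! p) (R ! (p + 1)) then swap_list R p (p + 1) else R) R ps"

lemma swap_pass_Nil [simp]: "swap_pass C [] R = R"
  by (simp add: swap_pass_def)

lemma swap_pass_Cons:
  "swap_pass C (p # ps) R = swap_pass C ps (if C p (R ! p) (R ! (p + 1)) then swap_list R p (p + 1) else R)"
  by (simp add: swap_pass_def)

lemma swap_pass_snoc:
  "swap_pass C (ps @ [p]) R =
     (let S = swap_pass C ps R in if C p (S ! p) (S ! (p + 1)) then swap_list S p (p + 1) else S)"
  by (simp add: swap_pass_def)

lemma length_swap_pass [simp]: "length (swap_pass C ps R) = length R"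
  by (induction ps arbitrary: R) (simp_all add: swap_pass_Cons)

lemma set_distinct_swap_pass:
  assumes "\<forall>p\<in>set ps. p + 1 < length R"
  shows "set (swap_pass C ps R) = set R \<and> distinct (swap_pass C ps R) = distinct R"
  using assms
  by (induction ps arbitrary: R) (auto simp: swap_pass_Cons set_swap_list distinct_swap_list)

definition adjacent_swaps :: "nat set \<Rightarrow> nat list \<Rightarrow> nat list" where
  "adjacent_swaps W R =
     map (\<lambda>k. if k \<in> W then R ! (k + 1) else if k \<noteq> 0 \<and> k - 1 \<in> W then R ! (k - 1) else R ! k)
       [0..<length R]"

lemma length_adjacent_swaps [simp]: "length (adjacent_swaps W R) = length R"
  by (simp add: adjacent_swaps_def)

lemma nth_adjacent_swaps:
  "k < length R \<Longrightarrow> adjacent_swaps W R ! k =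
     (if k \<in> W then R ! (k + 1) else if k \<noteq> 0 \<and> k - 1 \<in> W then R ! (k - 1) else R ! k)"
  unfolding adjacent_swaps_def by (subst nth_map) auto

abbreviation separated :: "nat list \<Rightarrow> bool" where
  "separated ps \<equiv> sorted_wrt (\<lambda>p q. p + 1 < q) ps"

lemma swap_pass_separated:
  assumes "separated ps" "\<forall>p\<in>set ps. p + 1 < length R"
  shows "swap_pass C ps R = adjacent_swaps {p \<in> set ps. C p (R ! p) (R ! (p + 1))} R"
  using assms
proof (induction ps rule: rev_induct)
  case Nil
  show ?case by (simp add: list_eq_iff_nth_eq nth_adjacent_swaps)
next
  case (snoc p ps)
  define W where "W = {q \<in> set ps. C q (R ! q) (R ! (q + 1))}"
  have before: "\<forall>q\<in>set ps. q + 1 < p" and p: "p + 1 < length R"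
    using snoc.prems by (auto simp: sorted_wrt_append)
  have IH: "swap_pass C ps R = adjacent_swaps W R"
    using snoc by (simp add: sorted_wrt_append W_def)
  have untouched: "p \<notin> W" "p + 1 \<notin> W" "p - 1 \<notin> W"
    using before by (fastforce simp: W_def)+
  have at_p: "adjacent_swaps W R ! p = R ! p" "adjacent_swaps W R ! (p + 1) = R ! (p + 1)"
    using p untouched by (simp_all add: nth_adjacent_swaps)
  show ?case
  proof (cases "C p (R ! p) (R ! (p + 1))")
    case True
    then have "{q \<in> set (ps @ [p]). C q (R ! q) (R ! (q + 1))} = insert p W"
      by (auto simp: W_def)
    moreover have "swap_list (adjacent_swaps W R) p (p + 1) = adjacent_swaps (insert p W) R"
    proof (rule nth_equalityI)
      fix k assume "k < length (swap_list (adjacent_swaps W R) p (p + 1))"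
      then show "swap_list (adjacent_swaps W R) p (p + 1) ! k = adjacent_swaps (insert p W) R ! k"
        using p untouched at_p nth_swap_list_adjacent[of p "adjacent_swaps W R" k]
        by (auto simp: nth_adjacent_swaps)
    qed simp
    ultimately show ?thesis
      using True at_p by (simp add: swap_pass_snoc IH)
  next
    case False
    then have "{q \<in> set (ps @ [p]). C q (R ! q) (R ! (q + 1))} = W"
      by (auto simp: W_def)
    with False show ?thesis
      using at_p by (simp add: swap_pass_snoc IH)
  qed
qed

lemma separated_gap:
  "separated ps \<Longrightarrow> p \<in> set ps \<Longrightarrow> q \<in> set ps \<Longrightarrow> p \<noteq> q \<Longrightarrow> p + 1 < q \<or> q + 1 < p"
  by (induction ps) auto

lemma adjacent_swaps_pair:
  assumes "separated ps" "W \<subseteq> set ps" "p \<in> set ps" "p + 1 < length R"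
  shows "{adjacent_swaps W R ! p, adjacent_swaps W R ! (p + 1)} = {R ! p, R ! (p + 1)}"
proof -
  have "p + 1 \<notin> W" "p \<noteq> 0 \<Longrightarrow> p - 1 \<notin> W"
    using assms(2,3) separated_gap[OF assms(1,3)] by force+
  then show ?thesis using assms(4) by (auto simp: nth_adjacent_swaps)
qed

lemma pairs_at_separated_positions_disjoint:
  assumes "distinct B" "separated ps" "\<forall>p\<in>set ps. p + 1 < length B"
    and "F \<subseteq> (\<lambda>p. (B ! p, B ! (p + 1))) ` set ps"
  shows "pairwise (\<lambda>(x, y) (x', y'). disjnt {x, y} {x', y'}) F"
proof (rule pairwise_subset[OF _ assms(4)], rule pairwise_imageI)
  fix p p' assume p: "p \<in> set ps" "p' \<in> set ps" and "(B ! p, B ! (p + 1)) \<noteq> (B ! p', B ! (p' + 1))"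
  then have "p + 1 < p' \<or> p' + 1 < p"
    using separated_gap[OF assms(2) p] by auto
  with p assms(1,3) show "(\<lambda>(x, y) (x', y'). disjnt {x, y} {x', y'}) (B ! p, B ! (p + 1)) (B ! p', B ! (p' + 1))"
    by (auto simp: disjnt_def nth_eq_iff_index_eq)
qed

definition flagged_inversions :: "(nat \<Rightarrow> nat \<Rightarrow> bool) \<Rightarrow> nat list \<Rightarrow> (nat \<times> nat) set" where
  "flagged_inversions Q R = {(x, y). (x, y) \<in> inversions R \<and> Q y x}"

definition flagged_adjacent_from :: "(nat \<Rightarrow> nat \<Rightarrow> bool) \<Rightarrow> nat \<Rightarrow> nat list \<Rightarrow> bool" where
  "flagged_adjacent_from Q j R \<longleftrightarrow>
     (\<forall>x y. (x, y) \<in> flagged_inversions Q R \<longrightarrow>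
        (\<exists>p. j \<le> p \<and> p + 1 < length R \<and> R ! p = x \<and> R ! (p + 1) = y))"

lemma flagged_inversions_mono:
  "inversions R' \<subseteq> inversions R \<Longrightarrow> flagged_inversions Q R' \<subseteq> flagged_inversions Q R"
  by (auto simp: flagged_inversions_def)

lemma flagged_adjacent_from_Suc:
  assumes "flagged_adjacent_from Q j R" and "\<not> Q (R ! (j + 1)) (R ! j)"
  shows "flagged_adjacent_from Q (Suc j) R"
  unfolding flagged_adjacent_from_def
proof (intro allI impI)
  fix x y assume xy: "(x, y) \<in> flagged_inversions Q R"
  with assms(1) obtain p where p: "j \<le> p" "p + 1 < length R" "R ! p = x" "R ! (p + 1) = y"
    by (auto simp: flagged_adjacent_from_def)
  have "p \<noteq> j"
    using xy p assms(2) by (auto simp: flagged_inversions_def)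
  with p show "\<exists>p. Suc j \<le> p \<and> p + 1 < length R \<and> R ! p = x \<and> R ! (p + 1) = y"
    by (intro exI[of _ p]) auto
qed

lemma flagged_adjacent_from_swap:
  assumes R: "distinct R" "j + 1 < length R" and swapped: "(R ! j, R ! (j + 1)) \<in> flagged_inversions Q R"
    and disj: "pairwise (\<lambda>(x, y) (x', y'). disjnt {x, y} {x', y'}) (flagged_inversions Q R)"
    and ahead: "flagged_adjacent_from Q j R"
  shows "flagged_adjacent_from Q (Suc j) (swap_list R j (j + 1))"
  unfolding flagged_adjacent_from_def
proof (intro allI impI)
  define R' where "R' = swap_list R j (j + 1)"
  fix x y assume "(x, y) \<in> flagged_inversions Q R'"
  moreover have "R ! (j + 1) < R ! j"
    using swapped by (auto simp: flagged_inversions_def inversions_def)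
  ultimately have xy: "(x, y) \<in> flagged_inversions Q R" "(x, y) \<noteq> (R ! j, R ! (j + 1))"
    using inversions_swap_list_adjacent[OF R] by (auto simp: flagged_inversions_def R'_def)
  with ahead obtain p where p: "j \<le> p" "p + 1 < length R" "R ! p = x" "R ! (p + 1) = y"
    by (auto simp: flagged_adjacent_from_def)
  have "p \<noteq> j"
    using xy(2) p by auto
  moreover have "p \<noteq> j + 1" \<comment> \<open>R ! (j + 1) already lies in the flagged pair being swapped\<close>
  proof
    assume "p = j + 1"
    then have "x = R ! (j + 1)"
      using p by simp
    with pairwiseD[OF disj xy(1) swapped] xy(2) show False
      by (auto simp: disjnt_def)
  qed
  ultimately have "R' ! p = x" "R' ! (p + 1) = y"
    using p R nth_swap_list_adjacent[of j R] by (auto simp: R'_def)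
  with p \<open>p \<noteq> j\<close> show "\<exists>p. Suc j \<le> p \<and> p + 1 < length R' \<and> R' ! p = x \<and> R' ! (p + 1) = y"
    by (intro exI[of _ p]) (auto simp: R'_def)
qed

lemma bubble_step_invariant:
  assumes R: "distinct R" "j + 1 < length R"
    and sound: "\<forall>u\<in>set R. \<forall>v\<in>set R. v < u \<longrightarrow> \<not> Q u v"
    and disj: "pairwise (\<lambda>(x, y) (x', y'). disjnt {x, y} {x', y'}) (flagged_inversions Q R)"
    and ahead: "flagged_adjacent_from Q j R"
  defines "R' \<equiv> if Q (R ! (j + 1)) (R ! j) then swap_list R j (j + 1) else R"
  shows "inversions R' \<subseteq> inversions R \<and> flagged_adjacent_from Q (Suc j) R'"
proof (cases "Q (R ! (j + 1)) (R ! j)")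
  case False
  with ahead show ?thesis
    by (simp add: R'_def flagged_adjacent_from_Suc)
next
  case True
  have "R ! j \<noteq> R ! (j + 1)"
    using R by (simp add: nth_eq_iff_index_eq)
  moreover have "\<not> R ! j < R ! (j + 1)"
    using sound True R(2) by auto
  ultimately have "R ! (j + 1) < R ! j" by simp
  then have "inversions R' \<subseteq> inversions R" "(R ! j, R ! (j + 1)) \<in> flagged_inversions Q R"
    using inversions_swap_list_adjacent[OF R] True R(2)
    by (auto simp: R'_def flagged_inversions_def inversions_def[of R])
  with flagged_adjacent_from_swap[OF R _ disj ahead] True show ?thesis
    by (simp add: R'_def)
qed

lemma bubble_pass_prefix_invariant:
  assumes R: "distinct R"
    and sound: "\<forall>u\<in>set R. \<forall>v\<in>set R. v < u \<longrightarrow> \<not> Q u v"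
    and disj: "pairwise (\<lambda>(x, y) (x', y'). disjnt {x, y} {x', y'}) (flagged_inversions Q R)"
    and adjacent: "flagged_adjacent_from Q 0 R"
    and j: "j \<le> length R - 1"
  shows "inversions (swap_pass (\<lambda>_ a b. Q b a) [0..<j] R) \<subseteq> inversions R
    \<and> flagged_adjacent_from Q j (swap_pass (\<lambda>_ a b. Q b a) [0..<j] R)"
  using j
proof (induction j)
  case 0
  with adjacent show ?case by simp
next
  case (Suc j)
  define S where "S = swap_pass (\<lambda>_ a b. Q b a) [0..<j] R"
  have j: "j + 1 < length R"
    using Suc.prems by simp
  have S: "length S = length R" "set S = set R" "distinct S"
    using set_distinct_swap_pass[of "[0..<j]" R] j R by (auto simp: S_def)
  have IH: "inversions S \<subseteq> inversions R" "flagged_adjacent_from Q j S"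
    using Suc by (simp_all add: S_def)
  have "pairwise (\<lambda>(x, y) (x', y'). disjnt {x, y} {x', y'}) (flagged_inversions Q S)"
    using disj flagged_inversions_mono[OF IH(1)] by (rule pairwise_subset)
  with bubble_step_invariant[of S j Q] S j sound IH(2)
  have "inversions (if Q (S ! (j + 1)) (S ! j) then swap_list S j (j + 1) else S) \<subseteq> inversions S
    \<and> flagged_adjacent_from Q (Suc j) (if Q (S ! (j + 1)) (S ! j) then swap_list S j (j + 1) else S)"
    by simp
  with IH(1) show ?case
    by (auto simp: S_def swap_pass_snoc Let_def)
qed

lemma bubble_pass_resolves_flagged:
  assumes "distinct R"
    and "\<forall>u\<in>set R. \<forall>v\<in>set R. v < u \<longrightarrow> \<not> Q u v"
    and "pairwise (\<lambda>(x, y) (x', y'). disjnt {x, y} {x', y'}) (flagged_inversions Q R)"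
    and "flagged_adjacent_from Q 0 R"
  shows "flagged_inversions Q (swap_pass (\<lambda>_ a b. Q b a) [0..<length R - 1] R) = {}"
proof -
  have "flagged_adjacent_from Q (length R - 1) (swap_pass (\<lambda>_ a b. Q b a) [0..<length R - 1] R)"
    using bubble_pass_prefix_invariant[OF assms] by simp
  then show ?thesis
    unfolding flagged_adjacent_from_def by fastforce
qed

definition confident :: "real \<Rightarrow> (nat \<Rightarrow> nat \<Rightarrow> int) \<Rightarrow> (nat \<Rightarrow> nat \<Rightarrow> nat) \<Rightarrow> nat \<Rightarrow> nat \<Rightarrow> bool" where
  "confident \<delta> s n i j \<longleftrightarrow> conf \<delta> (n i j) < real_of_int (s i j)"

lemma separated_pair_positions: "separated (pair_positions K h)"
  unfolding pair_positions_def sorted_wrt_map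
  by (rule sorted_wrt_mono_rel[OF _ sorted_wrt_upt]) auto

lemma pair_positions_bound: "p \<in> set (pair_positions K h) \<Longrightarrow> p + 1 < K"
  by (auto simp: pair_positions_def)

lemma display_list_eq_swap_pass:
  "display_list \<delta> K h s n cn B =
     swap_pass (\<lambda>p a b. \<not> confident \<delta> s n a b \<and> cn p) (pair_positions K h) B"
  by (simp add: display_list_def swap_pass_def confident_def not_less)

lemma display_list_eq_adjacent_swaps:
  assumes "length B = K"
  shows "display_list \<delta> K h s n cn B =
    adjacent_swaps {p \<in> set (pair_positions K h). \<not> confident \<delta> s n (B ! p) (B ! (p + 1)) \<and> cn p} B"
  unfolding display_list_eq_swap_pass
  using assms pair_positions_bound
  by (intro swap_pass_separated separated_pair_positions) auto

lemma update_list_eq_swap_pass: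
  "update_list \<delta> K s n B = swap_pass (\<lambda>_ a b. confident \<delta> s n b a) [0..<K - 1] B"
  by (simp add: update_list_def swap_pass_def confident_def)

lemma display_list_in_lists_K:
  assumes "B \<in> lists_K K"
  shows "display_list \<delta> K h s n cn B \<in> lists_K K"
  using assms set_distinct_swap_pass[of "pair_positions K h" B] pair_positions_bound lists_KD(3)[OF assms]
  by (simp add: display_list_eq_swap_pass lists_K_def)

definition stats_step :: "nat list \<Rightarrow> (nat \<Rightarrow> int) \<Rightarrow> (nat \<Rightarrow> nat \<Rightarrow> int) \<times> (nat \<Rightarrow> nat \<Rightarrow> nat) \<Rightarrow> nat
    \<Rightarrow> (nat \<Rightarrow> nat \<Rightarrow> int) \<times> (nat \<Rightarrow> nat \<Rightarrow> nat)" where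
  "stats_step R c = (\<lambda>(s, n) p.
     let i = R ! p; j = R ! (p + 1); d = c p - c (p + 1) in
     if \<bar>d\<bar> = 1 then
       ((\<lambda>a b. if a = i \<and> b = j then s a b + d else if a = j \<and> b = i then s a b - d else s a b),
        (\<lambda>a b. if (a = i \<and> b = j) \<or> (a = j \<and> b = i) then n a b + 1 else n a b))
     else (s, n))"

lemma stats_step_unchanged:
  assumes "{u, v} \<noteq> {R ! p, R ! (p + 1)}"
  shows "fst (stats_step R c sn p) u v = fst sn u v \<and> snd (stats_step R c sn p) u v = snd sn u v"
proof -
  have "\<not> ((u = R ! p \<and> v = R ! (p + 1)) \<or> (u = R ! (p + 1) \<and> v = R ! p))"
    using assms by auto
  then show ?thesis
    by (cases sn; cases "\<bar>c p - c (p + 1)\<bar> = 1") (simp_all add: stats_step_def Let_def, blast)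
qed

lemma foldl_stats_step_unchanged:
  assumes "\<forall>p\<in>set ps. {u, v} \<noteq> {R ! p, R ! (p + 1)}"
  shows "fst (foldl (stats_step R c) sn ps) u v = fst sn u v
    \<and> snd (foldl (stats_step R c) sn ps) u v = snd sn u v"
  using assms
proof (induction ps arbitrary: sn)
  case (Cons p ps)
  then show ?case
    using stats_step_unchanged[of u v R p c sn] by simp
qed simp

lemma update_stats_unchanged:
  assumes "\<forall>p\<in>set (pair_positions K h). {u, v} \<noteq> {R ! p, R ! (p + 1)}"
    and "update_stats K h R c (s, n) = (s', n')"
  shows "s' u v = s u v \<and> n' u v = n u v"
proof -
  have "update_stats K h R c (s, n) = foldl (stats_step R c) (s, n) (pair_positions K h)"
    unfolding update_stats_def stats_step_def ..
  with foldl_stats_step_unchanged[OF assms(1), of c "(s, n)"] assms(2) show ?thesis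
    by simp
qed

lemma inversion_adjacent:
  assumes "distinct B" "(x, y) \<in> inversions B" "p + 1 < length B" "{x, y} = {B ! p, B ! (p + 1)}"
  shows "x = B ! p \<and> y = B ! (p + 1)"
proof (rule ccontr)
  assume "\<not> (x = B ! p \<and> y = B ! (p + 1))"
  then have "x = B ! (p + 1)" "y = B ! p"
    using assms(4) by (auto simp: doubleton_eq_iff)
  moreover obtain q r where "q < r" "r < length B" "B ! q = x" "B ! r = y"
    using assms(2) by (auto simp: inversions_def)
  ultimately show False
    using assms(1,3) by (auto simp: nth_eq_iff_index_eq)
qed

lemma new_confident_inversion_at_pair_position:
  assumes B: "B \<in> lists_K K" and old: "flagged_inversions (confident \<delta> s n) B = {}"
    and stats: "update_stats K h (display_list \<delta> K h s n cn B) c (s, n) = (s', n')"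
    and xy: "(x, y) \<in> flagged_inversions (confident \<delta> s' n') B"
  shows "\<exists>p\<in>set (pair_positions K h). B ! p = x \<and> B ! (p + 1) = y"
proof -
  define W where "W = {p \<in> set (pair_positions K h). \<not> confident \<delta> s n (B ! p) (B ! (p + 1)) \<and> cn p}"
  let ?Rt = "display_list \<delta> K h s n cn B"
  have Rt: "?Rt = adjacent_swaps W B"
    using display_list_eq_adjacent_swaps[OF lists_KD(3)[OF B]] by (simp add: W_def)
  have "\<not> (s' y x = s y x \<and> n' y x = n y x)"
    using old xy by (auto simp: flagged_inversions_def confident_def)
  then obtain p where p: "p \<in> set (pair_positions K h)" "{y, x} = {?Rt ! p, ?Rt ! (p + 1)}"
    using update_stats_unchanged[OF _ stats] by blast
  have "p + 1 < length B"
    using pair_positions_bound[OF p(1)] lists_KD(3)[OF B] by simp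
  moreover have "{x, y} = {B ! p, B ! (p + 1)}"
    using p adjacent_swaps_pair[OF separated_pair_positions _ p(1) \<open>p + 1 < length B\<close>, of W]
    by (auto simp: Rt W_def insert_commute)
  ultimately have "x = B ! p \<and> y = B ! (p + 1)"
    using inversion_adjacent[OF lists_KD(1)[OF B]] xy by (auto simp: flagged_inversions_def)
  with p(1) show ?thesis by blast
qed

lemma bubble_round_invariant:
  assumes B: "B \<in> lists_K K" and old: "flagged_inversions (confident \<delta> s n) B = {}"
    and stats: "update_stats K h (display_list \<delta> K h s n cn B) c (s, n) = (s', n')"
    and sound_stats: "\<forall>i j. j < i \<longrightarrow> i < K \<longrightarrow> \<not> confident \<delta> s' n' i j"
  shows "update_list \<delta> K s' n' B \<in> lists_K K
    \<and> flagged_inversions (confident \<delta> s' n') (update_list \<delta> K s' n' B) = {}"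
proof -
  let ?Q = "confident \<delta> s' n'"
  note at_pair = new_confident_inversion_at_pair_position[OF B old stats]
  have len: "length B = K"
    using B by (rule lists_KD)
  have sound: "\<forall>u\<in>set B. \<forall>v\<in>set B. v < u \<longrightarrow> \<not> ?Q u v"
    using sound_stats lists_KD(2)[OF B] by auto
  have "flagged_inversions ?Q B \<subseteq> (\<lambda>p. (B ! p, B ! (p + 1))) ` set (pair_positions K h)"
    using at_pair by fastforce
  then have disj: "pairwise (\<lambda>(x, y) (x', y'). disjnt {x, y} {x', y'}) (flagged_inversions ?Q B)"
    using lists_KD(1)[OF B] separated_pair_positions pair_positions_bound len
    by (intro pairs_at_separated_positions_disjoint) auto
  have adjacent: "flagged_adjacent_from ?Q 0 B"
    unfolding flagged_adjacent_from_def
    using at_pair pair_positions_bound len by fastforce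
  have "\<forall>p\<in>set [0..<K - 1]. p + 1 < length B"
    using len by auto
  then have "set (update_list \<delta> K s' n' B) = {0..<K} \<and> distinct (update_list \<delta> K s' n' B)"
    using set_distinct_swap_pass B by (simp add: update_list_eq_swap_pass lists_K_def)
  moreover have "flagged_inversions ?Q (update_list \<delta> K s' n' B) = {}"
    using bubble_pass_resolves_flagged[OF lists_KD(1)[OF B] sound disj adjacent]
    by (simp add: update_list_eq_swap_pass len)
  ultimately show ?thesis
    by (simp add: lists_K_def)
qed

lemma bubble_state_invariant:
  assumes R0: "R0 \<in> lists_K K" and E: "good_event \<delta> K R0 A X coin \<alpha> hor" and m: "m \<le> hor"
  shows "bar_list \<delta> K R0 A X coin (Suc m) \<in> lists_K K
    \<and> flagged_inversions (confident \<delta> (stat_s \<delta> K R0 A X coin m) (stat_n \<delta> K R0 A X coin m))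
        (bar_list \<delta> K R0 A X coin (Suc m)) = {}"
  using m
proof (induction m)
  case 0
  show ?case
    using R0 by (simp add: bar_list_def stat_s_def stat_n_def flagged_inversions_def confident_def conf_def)
next
  case (Suc m)
  obtain s n B where state: "bubble_state \<delta> K R0 A X coin m = (s, n, B)"
    by (metis prod_cases3)
  define h where "h = Suc m mod 2"
  define Rt where "Rt = display_list \<delta> K h s n (coin (Suc m)) B"
  obtain s' n' where stats: "update_stats K h Rt (\<lambda>k. X (Suc m) Rt k * A (Suc m) (Rt ! k)) (s, n) = (s', n')"
    by (metis prod.exhaust)
  have state': "bubble_state \<delta> K R0 A X coin (Suc m) = (s', n', update_list \<delta> K s' n' B)"
    using stats by (simp add: state Let_def h_def Rt_def)
  have IH: "B \<in> lists_K K" "flagged_inversions (confident \<delta> s n) B = {}"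
    using Suc state by (simp_all add: bar_list_def stat_s_def stat_n_def)
  have next_state: "stat_s \<delta> K R0 A X coin (Suc m) = s'" "stat_n \<delta> K R0 A X coin (Suc m) = n'"
    "bar_list \<delta> K R0 A X coin (Suc (Suc m)) = update_list \<delta> K s' n' B"
    by (simp_all add: stat_s_def stat_n_def bar_list_def state' del: bubble_state.simps)
  have "real_of_int (stat_s \<delta> K R0 A X coin (Suc m) i j) \<le> conf \<delta> (stat_n \<delta> K R0 A X coin (Suc m) i j)"
    if "j < i" "i < K" for i j
  proof -
    have "Suc m \<in> {1..hor}"
      using Suc.prems by simp
    with E that show ?thesis
      unfolding good_event_def by blast
  qed
  then have "\<forall>i j. j < i \<longrightarrow> i < K \<longrightarrow> \<not> confident \<delta> s' n' i j"
    by (simp add: next_state confident_def not_less)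
  from bubble_round_invariant[OF IH stats[unfolded Rt_def] this] show ?case
    by (simp only: next_state)
qed

definition gap_sum :: "(nat \<Rightarrow> real) \<Rightarrow> (nat \<times> nat) set \<Rightarrow> real" where
  "gap_sum \<alpha> P = (\<Sum>(i, j)\<in>P. \<alpha> i - \<alpha> j)"

lemma gap_sum_mono:
  assumes \<alpha>: "strict_antimono_on {..<K} \<alpha>"
    and P: "P \<subseteq> {(i, j). i < j \<and> j < K}" and "P' \<subseteq> P"
  shows "gap_sum \<alpha> P' \<le> gap_sum \<alpha> P"
  unfolding gap_sum_def
proof (rule sum_mono2)
  have "P \<subseteq> {..<K} \<times> {..<K}"
    using P by auto
  then show "finite P"
    by (rule finite_subset) simp
  show "\<And>z. z \<in> P - P' \<Longrightarrow> 0 \<le> (case z of (i, j) \<Rightarrow> \<alpha> i - \<alpha> j)"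
    using P monotone_onD[OF \<alpha>] by (force simp: less_imp_le)
qed fact

lemma gap_sum_nonneg:
  "strict_antimono_on {..<K} \<alpha> \<Longrightarrow> P \<subseteq> {(i, j). i < j \<and> j < K} \<Longrightarrow> 0 \<le> gap_sum \<alpha> P"
  using gap_sum_mono[of K \<alpha> P "{}"] by (simp add: gap_sum_def)

lemma gap_le_gap_sum:
  "strict_antimono_on {..<K} \<alpha> \<Longrightarrow> P \<subseteq> {(i, j). i < j \<and> j < K} \<Longrightarrow> (i, j) \<in> P
    \<Longrightarrow> \<alpha> i - \<alpha> j \<le> gap_sum \<alpha> P"
  using gap_sum_mono[of K \<alpha> P "{(i, j)}"] by (simp add: gap_sum_def)

lemma exists_later_position_of_better_item:
  assumes B: "B \<in> lists_K K" and k: "k < K"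
  shows "\<exists>p. k \<le> p \<and> p < K \<and> B ! p \<le> k"
proof (rule ccontr)
  assume none: "\<not> ?thesis"
  have "{0..k} \<subseteq> (!) B ` {0..<k}"
  proof
    fix i assume i: "i \<in> {0..k}"
    then obtain p where "p < K" "B ! p = i"
      using lists_KD[OF B] k by (metis atLeastAtMost_iff atLeastLessThan_iff in_set_conv_nth le_less_trans)
    with none i show "i \<in> (!) B ` {0..<k}"
      by force
  qed
  then have "card {0..k} \<le> card ((!) B ` {0..<k})"
    by (rule card_mono[rotated]) simp
  also have "\<dots> \<le> k"
    using card_image_le[of "{0..<k}" "(!) B"] by simp
  finally show False by simp
qed

lemma displacement_le_gap_sum:
  assumes B: "B \<in> lists_K K" and \<alpha>: "strict_antimono_on {..<K} \<alpha>"
    and P: "P \<subseteq> {(i, j). i < j \<and> j < K}"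
    and adjacent: "\<forall>q. q + 1 < K \<longrightarrow> B ! (q + 1) < B ! q \<longrightarrow> (B ! (q + 1), B ! q) \<in> P"
    and k: "k < K"
  shows "\<alpha> k - \<alpha> (B ! k) \<le> gap_sum \<alpha> P"
proof -
  note B' = lists_KD[OF B]
  obtain p where p: "k \<le> p" "p < K" "B ! p \<le> k"
    using exists_later_position_of_better_item[OF B k] by blast
  define I where "I = {q \<in> {k..<p}. B ! (q + 1) < B ! q}"
  define d where "d q = \<alpha> (B ! (q + 1)) - \<alpha> (B ! q)" for q
  have "\<alpha> k \<le> \<alpha> (B ! p)"
    using monotone_onD[OF \<alpha>, of "B ! p" k] p k by (cases "B ! p = k") auto
  moreover have "\<alpha> (B ! p) - \<alpha> (B ! k) = (\<Sum>q\<in>{k..<p}. d q)"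
    using sum_Suc_diff'[OF p(1), of "\<lambda>q. \<alpha> (B ! q)"] by (simp add: d_def)
  moreover have "d q \<le> 0" if "q \<in> {k..<p} - I" for q
  proof -
    have "B ! q \<noteq> B ! (q + 1)"
      using that p B' by (auto simp: nth_eq_iff_index_eq)
    with that have "B ! q < B ! (q + 1)"
      by (auto simp: I_def)
    with that p nth_lists_K_less[OF B] show ?thesis
      using monotone_onD[OF \<alpha>, of "B ! q" "B ! (q + 1)"] by (auto simp: d_def)
  qed
  then have "(\<Sum>q\<in>{k..<p}. d q) \<le> (\<Sum>q\<in>I. d q)"
    using sum_mono2[of "{k..<p}" I "\<lambda>q. - d q"] by (force simp: sum_negf I_def)
  moreover have "(\<Sum>q\<in>I. d q) = gap_sum \<alpha> ((\<lambda>q. (B ! (q + 1), B ! q)) ` I)"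
  proof -
    have "inj_on (\<lambda>q. (B ! (q + 1), B ! q)) I"
      using p B' by (auto simp: inj_on_def I_def nth_eq_iff_index_eq)
    then show ?thesis
      by (simp add: gap_sum_def sum.reindex d_def)
  qed
  moreover have "gap_sum \<alpha> ((\<lambda>q. (B ! (q + 1), B ! q)) ` I) \<le> gap_sum \<alpha> P"
    using adjacent p by (intro gap_sum_mono[OF \<alpha> P]) (auto simp: I_def)
  ultimately show ?thesis by linarith
qed

lemma adjacent_gap_le_gap_sum:
  assumes B: "B \<in> lists_K K" and \<alpha>: "strict_antimono_on {..<K} \<alpha>"
    and P: "P \<subseteq> {(i, j). i < j \<and> j < K}"
    and q: "q + 1 < K" "B ! q < B ! (q + 1) \<Longrightarrow> (B ! q, B ! (q + 1)) \<in> P"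
  shows "\<alpha> (B ! q) - \<alpha> (B ! (q + 1)) \<le> gap_sum \<alpha> P"
proof (cases "B ! q < B ! (q + 1)")
  case True
  with q(2) show ?thesis
    using gap_le_gap_sum[where K = K and \<alpha> = \<alpha> and P = P, OF \<alpha> P] by blast
next
  case False
  moreover have "B ! q \<noteq> B ! (q + 1)"
    using lists_KD[OF B] q(1) by (simp add: nth_eq_iff_index_eq)
  ultimately show ?thesis
    using monotone_onD[OF \<alpha>, of "B ! (q + 1)" "B ! q"] nth_lists_K_less[OF B] q(1)
      gap_sum_nonneg[OF \<alpha> P] by fastforce
qed

lemma adjacent_swaps_gap_le_gap_sum:
  assumes B: "B \<in> lists_K K" and \<alpha>: "strict_antimono_on {..<K} \<alpha>"
    and P: "P \<subseteq> {(i, j). i < j \<and> j < K}"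
    and adjacent: "\<forall>q. q + 1 < K \<longrightarrow> B ! (q + 1) < B ! q \<longrightarrow> (B ! (q + 1), B ! q) \<in> P"
    and W: "\<forall>p\<in>W. p + 1 < K \<and> (B ! p < B ! (p + 1) \<longrightarrow> (B ! p, B ! (p + 1)) \<in> P)"
    and k: "k < K"
  shows "\<alpha> k - \<alpha> (adjacent_swaps W B ! k) \<le> 2 * gap_sum \<alpha> P"
proof -
  note displacement = displacement_le_gap_sum[OF B \<alpha> P adjacent]
  have "0 \<le> gap_sum \<alpha> P"
    using \<alpha> P by (rule gap_sum_nonneg)
  have len: "length B = K"
    using B by (rule lists_KD)
  consider (left) "k \<in> W" | (right) "k \<notin> W" "k \<noteq> 0" "k - 1 \<in> W" | (fixed) "k \<notin> W" "k = 0 \<or> k - 1 \<notin> W"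
    by auto
  then show ?thesis
  proof cases
    case left
    with W have "\<alpha> (B ! k) - \<alpha> (B ! (k + 1)) \<le> gap_sum \<alpha> P"
      by (intro adjacent_gap_le_gap_sum[OF B \<alpha> P]) auto
    with displacement[OF k] left len k show ?thesis
      by (simp add: nth_adjacent_swaps)
  next
    case right
    then have "\<alpha> k \<le> \<alpha> (k - 1)"
      using monotone_onD[OF \<alpha>, of "k - 1" k] k by fastforce
    moreover have "\<alpha> (k - 1) - \<alpha> (B ! (k - 1)) \<le> gap_sum \<alpha> P"
      using displacement[of "k - 1"] k by simp
    ultimately show ?thesis
      using right len k \<open>0 \<le> gap_sum \<alpha> P\<close> by (simp add: nth_adjacent_swaps)
  next
    case fixed
    with displacement[OF k] len k \<open>0 \<le> gap_sum \<alpha> P\<close> show ?thesis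
      by (auto simp: nth_adjacent_swaps)
  qed
qed

lemma weighted_regret_le:
  fixes c c' a a' :: "nat \<Rightarrow> real"
  assumes "\<And>k. k < K \<Longrightarrow> 0 \<le> c k" "\<And>k. k < K \<Longrightarrow> c k \<le> cmax" "\<And>k. k < K \<Longrightarrow> c k \<le> c' k"
    and "\<And>k. k < K \<Longrightarrow> 0 \<le> a' k" "\<And>k. k < K \<Longrightarrow> a k - a' k \<le> D" "0 \<le> D"
  shows "(\<Sum>k<K. c k * a k - c' k * a' k) \<le> real K * cmax * D"
proof -
  have "c k * a k - c' k * a' k \<le> cmax * D" if "k < K" for k
  proof -
    have "c k * a k - c' k * a' k \<le> c k * (a k - a' k)"
      using mult_left_mono[OF assms(3,4)[OF that]] by (simp add: algebra_simps)
    also have "\<dots> \<le> c k * D"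
      using assms(1,5)[OF that] by (rule mult_left_mono[rotated])
    also have "\<dots> \<le> cmax * D"
      using assms(2)[OF that] assms(6) by (rule mult_right_mono)
    finally show ?thesis .
  qed
  then have "(\<Sum>k<K. c k * a k - c' k * a' k) \<le> (\<Sum>k<K. cmax * D)"
    by (intro sum_mono) simp
  then show ?thesis by simp
qed

lemma sum_upper_triangle_indicator:
  fixes f :: "nat \<Rightarrow> nat \<Rightarrow> real"
  assumes "P \<subseteq> {(i, j). i < j \<and> j < K}"
  shows "(\<Sum>i<K. \<Sum>j\<in>{i+1..<K}. if (i, j) \<in> P then f i j else 0) = (\<Sum>(i, j)\<in>P. f i j)"
proof -
  have "(\<Sum>i<K. \<Sum>j\<in>{i+1..<K}. if (i, j) \<in> P then f i j else 0)
      = (\<Sum>(i, j)\<in>(SIGMA i:{..<K}. {i+1..<K}). if (i, j) \<in> P then f i j else 0)"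
    by (rule sum.Sigma) auto
  also have "\<dots> = (\<Sum>(i, j)\<in>(SIGMA i:{..<K}. {i+1..<K}) \<inter> P. f i j)"
    by (subst sum.inter_restrict) (auto intro!: sum.cong)
  also have "(SIGMA i:{..<K}. {i+1..<K}) \<inter> P = P"
    using assms by auto
  finally show ?thesis .
qed

lemma opt_list_in_lists_K: "opt_list K \<in> lists_K K"
  by (simp add: opt_list_def lists_K_def)

lemma pos_of_nth: "distinct B \<Longrightarrow> q < length B \<Longrightarrow> pos_of B (B ! q) = q"
  unfolding pos_of_def by (rule the_equality) (auto simp: nth_eq_iff_index_eq)

lemma bar_list_invariant:
  assumes R0: "R0 \<in> lists_K K" and E: "good_event \<delta> K R0 A X coin \<alpha> hor" and t: "t \<in> {1..hor}"
  shows "bar_list \<delta> K R0 A X coin t \<in> lists_K K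
    \<and> flagged_inversions (confident \<delta> (stat_s \<delta> K R0 A X coin (t - 1)) (stat_n \<delta> K R0 A X coin (t - 1)))
        (bar_list \<delta> K R0 A X coin t) = {}"
proof -
  obtain m where "t = Suc m" "m \<le> hor"
    using t by (cases t) auto
  with bubble_state_invariant[OF R0 E] show ?thesis
    by simp
qed

lemma adjacent_pair_in_P_set:
  assumes B: "bar_list \<delta> K R0 A X coin t \<in> lists_K K" and q: "q + 1 < K"
    and ij: "i < j" "{i, j} = {bar_list \<delta> K R0 A X coin t ! q, bar_list \<delta> K R0 A X coin t ! (q + 1)}"
    and "\<not> confident \<delta> (stat_s \<delta> K R0 A X coin (t - 1)) (stat_n \<delta> K R0 A X coin (t - 1)) i j"
  shows "(i, j) \<in> P_set \<delta> K R0 A X coin t"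
proof -
  let ?B = "bar_list \<delta> K R0 A X coin t"
  note B' = lists_KD[OF B]
  have "?B ! q < K" "?B ! (q + 1) < K"
    using nth_lists_K_less[OF B] q by simp_all
  moreover have "pos_of ?B (?B ! q) = q" "pos_of ?B (?B ! (q + 1)) = q + 1"
    using B' q by (simp_all add: pos_of_nth)
  ultimately show ?thesis
    using ij assms(5) by (auto simp: P_set_def doubleton_eq_iff confident_def not_less)
qed

lemma adjacent_inversions_in_P_set:
  assumes R0: "R0 \<in> lists_K K" and E: "good_event \<delta> K R0 A X coin \<alpha> hor" and t: "t \<in> {1..hor}"
  defines "B \<equiv> bar_list \<delta> K R0 A X coin t"
  shows "\<forall>q. q + 1 < K \<longrightarrow> B ! (q + 1) < B ! q \<longrightarrow> (B ! (q + 1), B ! q) \<in> P_set \<delta> K R0 A X coin t"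
proof (intro allI impI)
  fix q assume q: "q + 1 < K" "B ! (q + 1) < B ! q"
  have inv: "B \<in> lists_K K"
    "flagged_inversions (confident \<delta> (stat_s \<delta> K R0 A X coin (t - 1)) (stat_n \<delta> K R0 A X coin (t - 1))) B = {}"
    using bar_list_invariant[OF R0 E t] by (simp_all add: B_def)
  have "(B ! q, B ! (q + 1)) \<in> inversions B"
    using q lists_KD(3)[OF inv(1)] by (auto simp: inversions_def)
  with inv(2) have "\<not> confident \<delta> (stat_s \<delta> K R0 A X coin (t - 1)) (stat_n \<delta> K R0 A X coin (t - 1)) (B ! (q + 1)) (B ! q)"
    by (auto simp: flagged_inversions_def)
  with q inv(1) show "(B ! (q + 1), B ! q) \<in> P_set \<delta> K R0 A X coin t"
    unfolding B_def by (intro adjacent_pair_in_P_set) (auto simp: insert_commute)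
qed

lemma P_set_subset: "P_set \<delta> K R0 A X coin t \<subseteq> {(i, j). i < j \<and> j < K}"
  by (auto simp: P_set_def)

lemma shown_list_in_lists_K:
  assumes "R0 \<in> lists_K K" "good_event \<delta> K R0 A X coin \<alpha> hor" "t \<in> {1..hor}"
  shows "shown_list \<delta> K R0 A X coin t \<in> lists_K K"
  using bar_list_invariant[OF assms] by (simp add: shown_list_def display_list_in_lists_K)

lemma shown_list_gap_le_gap_sum:
  assumes R0: "R0 \<in> lists_K K" and E: "good_event \<delta> K R0 A X coin \<alpha> hor" and t: "t \<in> {1..hor}"
    and \<alpha>: "strict_antimono_on {..<K} \<alpha>" and k: "k < K"
  shows "\<alpha> k - \<alpha> (shown_list \<delta> K R0 A X coin t ! k) \<le> 2 * gap_sum \<alpha> (P_set \<delta> K R0 A X coin t)"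
proof -
  define B where "B = bar_list \<delta> K R0 A X coin t"
  define s where "s = stat_s \<delta> K R0 A X coin (t - 1)"
  define n where "n = stat_n \<delta> K R0 A X coin (t - 1)"
  define P where "P = P_set \<delta> K R0 A X coin t"
  define W where "W = {p \<in> set (pair_positions K (t mod 2)). \<not> confident \<delta> s n (B ! p) (B ! (p + 1)) \<and> coin t p}"
  have B: "B \<in> lists_K K"
    using bar_list_invariant[OF R0 E t] by (simp add: B_def)
  have shown: "shown_list \<delta> K R0 A X coin t = adjacent_swaps W B"
    using display_list_eq_adjacent_swaps[OF lists_KD(3)[OF B]]
    by (simp add: shown_list_def B_def s_def n_def W_def)
  have W: "\<forall>p\<in>W. p + 1 < K \<and> (B ! p < B ! (p + 1) \<longrightarrow> (B ! p, B ! (p + 1)) \<in> P)"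
  proof
    fix p assume "p \<in> W"
    then have p: "p + 1 < K" "\<not> confident \<delta> s n (B ! p) (B ! (p + 1))"
      using pair_positions_bound by (auto simp: W_def)
    then show "p + 1 < K \<and> (B ! p < B ! (p + 1) \<longrightarrow> (B ! p, B ! (p + 1)) \<in> P)"
      using adjacent_pair_in_P_set[OF B[unfolded B_def] p(1)] by (simp add: B_def s_def n_def P_def)
  qed
  show ?thesis
    using adjacent_swaps_gap_le_gap_sum[OF B \<alpha> _ _ W k] adjacent_inversions_in_P_set[OF R0 E t] P_set_subset
    by (simp add: shown B_def P_def)
qed

theorem lemma4:
  fixes K hor :: nat and \<delta> :: real
    and \<alpha> :: "nat \<Rightarrow> real" and \<chi> :: "nat list \<Rightarrow> nat \<Rightarrow> real"
    and R0 :: "nat list"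
    and A :: "nat \<Rightarrow> nat \<Rightarrow> int" and X :: "nat \<Rightarrow> nat list \<Rightarrow> nat \<Rightarrow> int"
    and coin :: "nat \<Rightarrow> nat \<Rightarrow> bool"
  assumes delta: "0 < \<delta>" "\<delta> < 1"
    and R0: "R0 \<in> lists_K K"
    and A01: "\<And>t i. A t i \<in> {0, 1}"
    and X01: "\<And>t R k. X t R k \<in> {0, 1}"
    and alpha_range: "\<And>i. i < K \<Longrightarrow> 0 < \<alpha> i \<and> \<alpha> i \<le> 1"
    and alpha_dec: "\<And>i j. i < j \<Longrightarrow> j < K \<Longrightarrow> \<alpha> j < \<alpha> i"
    and chi_range: "\<And>R k. R \<in> lists_K K \<Longrightarrow> k < K \<Longrightarrow> 0 \<le> \<chi> R k \<and> \<chi> R k \<le> 1"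
    and A1: "\<And>R. R \<in> lists_K K \<Longrightarrow> reward K R \<alpha> \<chi> \<le> reward K (opt_list K) \<alpha> \<chi>"
    and A2: "\<And>R R' k. R \<in> lists_K K \<Longrightarrow> R' \<in> lists_K K \<Longrightarrow> k < K \<Longrightarrow>
               set (take k R) = set (take k R') \<Longrightarrow> \<chi> R k = \<chi> R' k"
    and A3: "\<And>R k l. R \<in> lists_K K \<Longrightarrow> k < l \<Longrightarrow> l < K \<Longrightarrow> \<chi> R l \<le> \<chi> R k"
    and A4: "\<And>R k l. R \<in> lists_K K \<Longrightarrow> k < l \<Longrightarrow> l < K \<Longrightarrow>
               (\<alpha> (R ! k) \<le> \<alpha> (R ! l) \<longleftrightarrow> \<chi> (swap_list R k l) l \<le> \<chi> R l)"
    and A5: "\<And>R k. R \<in> lists_K K \<Longrightarrow> k < K \<Longrightarrow> \<chi> (opt_list K) k \<le> \<chi> R k"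
    and E: "good_event \<delta> K R0 A X coin \<alpha> hor"
    and t: "t \<in> {1..hor}"
  shows "(\<Sum>k<K. \<chi> (opt_list K) k * \<alpha> k
              - \<chi> (shown_list \<delta> K R0 A X coin t) k * \<alpha> (shown_list \<delta> K R0 A X coin t ! k))
         \<le> 3 * real K * \<chi> (opt_list K) 0 *
            (\<Sum>i<K. \<Sum>j\<in>{i+1..<K}.
               (if (i, j) \<in> P_set \<delta> K R0 A X coin t then \<alpha> i - \<alpha> j else 0))"
proof -
  let ?R = "shown_list \<delta> K R0 A X coin t" and ?P = "P_set \<delta> K R0 A X coin t"
  have R: "?R \<in> lists_K K"
    using R0 E t by (rule shown_list_in_lists_K)
  have \<alpha>: "strict_antimono_on {..<K} \<alpha>"
    using alpha_dec by (auto intro: monotone_onI)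
  have gap_nonneg: "0 \<le> gap_sum \<alpha> ?P"
    using \<alpha> P_set_subset by (rule gap_sum_nonneg)
  have "\<chi> (opt_list K) k \<le> \<chi> (opt_list K) 0" if "k < K" for k
    using A3[OF opt_list_in_lists_K, of 0 k] that by (cases k) auto
  moreover have "0 \<le> \<alpha> (?R ! k)" if "k < K" for k
    using alpha_range[OF nth_lists_K_less[OF R that]] by simp
  ultimately have "(\<Sum>k<K. \<chi> (opt_list K) k * \<alpha> k - \<chi> ?R k * \<alpha> (?R ! k))
      \<le> real K * \<chi> (opt_list K) 0 * (2 * gap_sum \<alpha> ?P)"
    using chi_range[OF opt_list_in_lists_K] A5[OF R] gap_nonneg shown_list_gap_le_gap_sum[OF R0 E t \<alpha>]
    by (intro weighted_regret_le) auto
  also have "\<dots> \<le> 3 * real K * \<chi> (opt_list K) 0 * gap_sum \<alpha> ?P"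
    using gap_nonneg chi_range[OF opt_list_in_lists_K, of 0] by (cases "K = 0") auto
  also have "gap_sum \<alpha> ?P = (\<Sum>i<K. \<Sum>j\<in>{i+1..<K}. (if (i, j) \<in> ?P then \<alpha> i - \<alpha> j else 0))"
    using sum_upper_triangle_indicator[OF P_set_subset] by (simp add: gap_sum_def)
  finally show ?thesis .
qed

end
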